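(* Let $N$ be a 2-step nilpotent real Lie group with a left-invariant pseudo-Riemannian metric $\langle\cdot,\cdot\rangle$ for which the center $\mathfrak z$ of its Lie algebra is nondegenerate. Then $N$ is of pseudo-$H$-type (of $H$-type when the metric is Riemannian) if and only if every nondegenerate semi-central plane has sectional curvature $K=\tfrac14$.
   Context: Put $\mathfrak v=\mathfrak z^\perp$. For $z\in\mathfrak z$ define $j(z)\in\mathrm{End}(\mathfrak v)$ by $\langle [x,y],z\rangle=\langle y,j(z)x\rangle$ for all $x,y\in\mathfrak v$. $N$ is of pseudo-$H$-type if $j(z)^2=-\langle z,z\rangle\,\mathrm{Id}_{\mathfrak v}$ for all $z\in\mathfrak z$; when the metric is Riemannian this is called $H$-type. A semi-central plane is a 2-plane spanned by a vector of $\mathfrak z$ and a vector of $\mathfrak v$; nondegenerate means the metric restricted to it is nondegenerate. Sectional curvature is that of the Levi-Civita connection. *)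

theory Defs
  imports "HOL-Analysis.Analysis"
begin

text \<open>A finite-dimensional real Lie algebra is modelled by a finite-dimensional real vector
space (type of class euclidean_space; its built-in inner product is NOT used) with a bracket.
A left-invariant pseudo-Riemannian metric on the Lie group is modelled by a nondegenerate
symmetric bilinear form g on the Lie algebra.\<close>

definition lie_algebra :: "('a::euclidean_space \<Rightarrow> 'a \<Rightarrow> 'a) \<Rightarrow> bool" where
  "lie_algebra br \<longleftrightarrow> bilinear br \<and> (\<forall>x y. br x y = - br y x)
     \<and> (\<forall>x y w. br x (br y w) + br y (br w x) + br w (br x y) = 0)"

definition two_step_nilpotent :: "('a::euclidean_space \<Rightarrow> 'a \<Rightarrow> 'a) \<Rightarrow> bool" where
  "two_step_nilpotent br \<longleftrightarrow> (\<forall>x y w. br (br x y) w = 0) \<and> (\<exists>x y. br x y \<noteq> 0)"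

definition pseudo_metric :: "('a::euclidean_space \<Rightarrow> 'a \<Rightarrow> real) \<Rightarrow> bool" where
  "pseudo_metric g \<longleftrightarrow> bilinear g \<and> (\<forall>x y. g x y = g y x)
     \<and> (\<forall>x. (\<forall>y. g x y = 0) \<longrightarrow> x = 0)"

definition center :: "('a::euclidean_space \<Rightarrow> 'a \<Rightarrow> 'a) \<Rightarrow> 'a set" where
  "center br = {x. \<forall>y. br x y = 0}"

definition nondeg_on :: "('a::euclidean_space \<Rightarrow> 'a \<Rightarrow> real) \<Rightarrow> 'a set \<Rightarrow> bool" where
  "nondeg_on g S \<longleftrightarrow> (\<forall>x\<in>S. (\<forall>y\<in>S. g x y = 0) \<longrightarrow> x = 0)"

definition vpart :: "('a::euclidean_space \<Rightarrow> 'a \<Rightarrow> real) \<Rightarrow> ('a \<Rightarrow> 'a \<Rightarrow> 'a) \<Rightarrow> 'a set" where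
  "vpart g br = {x. \<forall>z\<in>center br. g x z = 0}"

definition jmap :: "('a::euclidean_space \<Rightarrow> 'a \<Rightarrow> real) \<Rightarrow> ('a \<Rightarrow> 'a \<Rightarrow> 'a) \<Rightarrow> 'a \<Rightarrow> 'a \<Rightarrow> 'a" where
  "jmap g br z x = (THE w. w \<in> vpart g br \<and> (\<forall>y\<in>vpart g br. g y w = g (br x y) z))"

definition pseudo_H_type :: "('a::euclidean_space \<Rightarrow> 'a \<Rightarrow> real) \<Rightarrow> ('a \<Rightarrow> 'a \<Rightarrow> 'a) \<Rightarrow> bool" where
  "pseudo_H_type g br \<longleftrightarrow>
     (\<forall>z\<in>center br. \<forall>x\<in>vpart g br. jmap g br z (jmap g br z x) = - (g z z) *\<^sub>R x)"

text \<open>Levi-Civita connection on left-invariant vector fields (Koszul formula):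
  2 g (nabla X Y) W = g [X,Y] W - g [Y,W] X + g [W,X] Y.\<close>
definition nabla :: "('a::euclidean_space \<Rightarrow> 'a \<Rightarrow> real) \<Rightarrow> ('a \<Rightarrow> 'a \<Rightarrow> 'a) \<Rightarrow> 'a \<Rightarrow> 'a \<Rightarrow> 'a" where
  "nabla g br X Y = (THE u. \<forall>W. 2 * g u W = g (br X Y) W - g (br Y W) X + g (br W X) Y)"

definition curv :: "('a::euclidean_space \<Rightarrow> 'a \<Rightarrow> real) \<Rightarrow> ('a \<Rightarrow> 'a \<Rightarrow> 'a) \<Rightarrow> 'a \<Rightarrow> 'a \<Rightarrow> 'a \<Rightarrow> 'a" where
  "curv g br X Y W = nabla g br X (nabla g br Y W) - nabla g br Y (nabla g br X W)
      - nabla g br (br X Y) W"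

definition sec_curv :: "('a::euclidean_space \<Rightarrow> 'a \<Rightarrow> real) \<Rightarrow> ('a \<Rightarrow> 'a \<Rightarrow> 'a) \<Rightarrow> 'a \<Rightarrow> 'a \<Rightarrow> real" where
  "sec_curv g br X Y = g (curv g br X Y Y) X / (g X X * g Y Y - (g X Y)\<^sup>2)"

text \<open>The plane spanned by X and Y is nondegenerate (Gram determinant nonzero; this also
forces X, Y to be linearly independent).\<close>
definition nondeg_plane :: "('a::euclidean_space \<Rightarrow> 'a \<Rightarrow> real) \<Rightarrow> 'a \<Rightarrow> 'a \<Rightarrow> bool" where
  "nondeg_plane g X Y \<longleftrightarrow> g X X * g Y Y - (g X Y)\<^sup>2 \<noteq> 0"

end

(* For z in the centre and x in its g-orthogonal complement v, the Koszul formula gives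
   nabla_z x = -j(z)x/2 and R(z,x)x = [x, j(z)x]/4, so the sectional curvature of the plane
   spanned by z and x is <j(z)x, j(z)x> / (4 <z,z> <x,x>).  Hence K = 1/4 on all nondegenerate
   semi-central planes says exactly that <j(z)x, j(z)x> = <z,z> <x,x> for nonnull z and x.
   Both sides are quadratic forms in x and in z, and nonnull vectors are dense in the
   nondegenerate spaces z and v, so the identity holds for all z and x; polarizing it and using
   the skew-symmetry of j(z) gives j(z)^2 = -<z,z> Id. *)

theory Submission
  imports Defs
begin

lemma quadratic_eq_0_cofinite:
  fixes a b c :: real
  assumes "finite {t. a + b * t + c * t\<^sup>2 \<noteq> 0}"
  shows "a = 0" and "b = 0" and "c = 0"
proof -
  have poly_eq: "poly [:a, b, c:] t = a + b * t + c * t\<^sup>2" for t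
    by (simp add: algebra_simps power2_eq_square)
  have "[:a, b, c:] = 0"
  proof (rule ccontr)
    assume "[:a, b, c:] \<noteq> 0"
    then have "finite {t. poly [:a, b, c:] t = 0}"
      by (rule poly_roots_finite)
    then have "finite ({t. a + b * t + c * t\<^sup>2 \<noteq> 0} \<union> {t. a + b * t + c * t\<^sup>2 = 0})"
      using assms by (simp only: poly_eq finite_Un)
    moreover have "{t. a + b * t + c * t\<^sup>2 \<noteq> 0} \<union> {t. a + b * t + c * t\<^sup>2 = 0} = UNIV"
      by blast
    ultimately show False
      using infinite_UNIV_char_0[where 'a = real] by simp
  qed
  then show "a = 0" "b = 0" "c = 0" by simp_all
qed

locale nondegenerate_form =
  fixes g :: "'a::euclidean_space \<Rightarrow> 'a \<Rightarrow> real"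
  assumes pseudo_metric: "pseudo_metric g"
begin

lemma bilinear: "bilinear g"
  using pseudo_metric by (simp add: pseudo_metric_def)

lemma symmetric: "g x y = g y x"
  using pseudo_metric by (simp add: pseudo_metric_def)

lemma nondegenerate: "(\<And>y. g x y = 0) \<Longrightarrow> x = 0"
  using pseudo_metric by (simp add: pseudo_metric_def)

lemmas g_simps = bilinear_ladd[OF bilinear] bilinear_radd[OF bilinear]
  bilinear_lmul[OF bilinear] bilinear_rmul[OF bilinear]
  bilinear_lsub[OF bilinear] bilinear_rsub[OF bilinear]
  bilinear_lneg[OF bilinear] bilinear_rneg[OF bilinear]
  bilinear_lzero[OF bilinear] bilinear_rzero[OF bilinear]

lemma eq_if_g_eq: "(\<And>w. g u w = g v w) \<Longrightarrow> u = v"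
  using nondegenerate[of "u - v"] by (simp add: g_simps)

lemma g_line: "g (a + t *\<^sub>R b) (a + t *\<^sub>R b) = g a a + 2 * g a b * t + g b b * t\<^sup>2"
  using symmetric[of b a] by (simp add: g_simps power2_eq_square algebra_simps)

lemma finite_null_on_line:
  assumes "g a a = 0" and "g a b \<noteq> 0"
  shows "finite {t. g (a + t *\<^sub>R b) (a + t *\<^sub>R b) = 0}"
proof (rule finite_subset)
  show "{t. g (a + t *\<^sub>R b) (a + t *\<^sub>R b) = 0} \<subseteq> {0, - 2 * g a b / g b b}"
  proof
    fix t assume "t \<in> {t. g (a + t *\<^sub>R b) (a + t *\<^sub>R b) = 0}"
    then have "t * (2 * g a b + g b b * t) = 0"
      using assms(1) by (simp add: g_line algebra_simps power2_eq_square)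
    moreover have "2 * g a b + g b b * t = 0 \<Longrightarrow> t = - 2 * g a b / g b b"
      using assms(2) by (cases "g b b = 0") (simp_all add: field_simps)
    ultimately show "t \<in> {0, - 2 * g a b / g b b}" by auto
  qed
qed simp

text \<open>The Euclidean inner product of the carrier type is only an auxiliary: transporting g to
it through the Riesz map gives access to the library's dimension count for orthogonal
complements.\<close>
definition riesz :: "'a \<Rightarrow> 'a" where
  "riesz u = adjoint (g u) 1"

lemma inner_riesz: "riesz u \<bullet> w = g u w"
proof -
  have "linear (g u)"
    using bilinear by (simp add: bilinear_def)
  then show ?thesis
    unfolding riesz_def by (simp add: adjoint_works inner_commute)
qed

lemma linear_riesz: "linear riesz"
proof (rule linearI)
  fix x y :: 'a and c :: real
  show "riesz (x + y) = riesz x + riesz y"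
    by (rule vector_eq_rdot[THEN iffD1]) (simp add: inner_add_left inner_riesz g_simps)
  show "riesz (c *\<^sub>R x) = c *\<^sub>R riesz x"
    by (rule vector_eq_rdot[THEN iffD1]) (simp add: inner_riesz g_simps)
qed

lemma inj_riesz: "inj riesz"
  by (rule injI) (metis eq_if_g_eq inner_riesz)

lemma surj_riesz: "surj riesz"
  using linear_injective_imp_surjective[OF linear_riesz inj_riesz] by simp

lemma linear_functional_representable:
  assumes "linear f"
  obtains u where "\<And>w. g u w = f w"
proof -
  obtain u where "riesz u = adjoint f 1"
    using surj_riesz by (metis surjD)
  then have "g u w = f w" for w
    using adjoint_works[OF assms, of w 1] by (simp add: inner_riesz[symmetric] inner_commute)
  then show thesis by (rule that)
qed

definition perp :: "'a set \<Rightarrow> 'a set" where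
  "perp S = {x. \<forall>z\<in>S. g x z = 0}"

lemma subspace_perp: "subspace (perp S)"
  unfolding subspace_def perp_def by (auto simp: g_simps)

lemma riesz_image_perp: "riesz ` perp S = {y. \<forall>x\<in>S. orthogonal x y}"
proof -
  have "riesz x \<in> {y. \<forall>x\<in>S. orthogonal x y} \<longleftrightarrow> x \<in> perp S" for x
    by (simp add: perp_def orthogonal_def inner_commute[of _ "riesz x"] inner_riesz)
  then show ?thesis
    using surj_riesz by (auto simp: image_iff) (metis surjD)
qed

lemma dim_perp:
  assumes "subspace S"
  shows "dim (perp S) + dim S = DIM('a)"
proof -
  have "dim (perp S) = dim {y. \<forall>x\<in>S. orthogonal x y}"
    using dim_image_eq[OF linear_riesz, of "perp S"] inj_riesz
    by (simp add: riesz_image_perp inj_on_def inj_def)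
  then show ?thesis
    using dim_subspace_orthogonal_to_vectors[OF assms subspace_UNIV subset_UNIV] by simp
qed

lemma perp_Int_eq:
  assumes "subspace S" and "nondeg_on g S"
  shows "perp S \<inter> S = {0}"
  using assms subspace_0[OF subspace_perp] unfolding nondeg_on_def perp_def
  by (auto simp: subspace_0)

lemma perp_plus_eq_UNIV:
  assumes "subspace S" and "nondeg_on g S"
  shows "{v + s |v s. v \<in> perp S \<and> s \<in> S} = UNIV"
proof -
  have "dim {v + s |v s. v \<in> perp S \<and> s \<in> S} = DIM('a)"
    using dim_sums_Int[OF subspace_perp[of S] assms(1)] perp_Int_eq[OF assms] dim_perp[OF assms(1)]
    by simp
  then have "span {v + s |v s. v \<in> perp S \<and> s \<in> S} = UNIV"
    by (rule dim_eq_full[THEN iffD1])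
  moreover have "span {v + s |v s. v \<in> perp S \<and> s \<in> S} = {v + s |v s. v \<in> perp S \<and> s \<in> S}"
    by (rule span_eq_iff[THEN iffD2, OF subspace_sums[OF subspace_perp assms(1)]])
  ultimately show ?thesis by simp
qed

lemma nondeg_on_perp:
  assumes "subspace S" and "nondeg_on g S"
  shows "nondeg_on g (perp S)"
  unfolding nondeg_on_def
proof (intro ballI impI)
  fix x assume x: "x \<in> perp S" and orth: "\<forall>y\<in>perp S. g x y = 0"
  have "g x w = 0" for w
  proof -
    obtain v s where "v \<in> perp S" "s \<in> S" "w = v + s"
      using perp_plus_eq_UNIV[OF assms] by blast
    then show ?thesis
      using x orth by (simp add: perp_def g_simps)
  qed
  then show "x = 0" by (rule nondegenerate)
qed

text \<open>A null x \<noteq> 0 is approached along a line x + t y with g x y \<noteq> 0, on which only finitely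
many points are null.\<close>
lemma bilinear_diag_eq_0_if_nonnull:
  assumes B: "bilinear B" and S: "subspace S" "nondeg_on g S"
    and nonnull: "\<And>x. x \<in> S \<Longrightarrow> g x x \<noteq> 0 \<Longrightarrow> B x x = (0::real)"
    and x: "x \<in> S"
  shows "B x x = 0"
proof (cases "g x x = 0 \<and> x \<noteq> 0")
  case False
  then show ?thesis
    using nonnull x bilinear_lzero[OF B] by auto
next
  case True
  then obtain y where y: "y \<in> S" "g x y \<noteq> 0"
    using S(2) x unfolding nondeg_on_def by blast
  have "{t. B x x + (B x y + B y x) * t + B y y * t\<^sup>2 \<noteq> 0}
      \<subseteq> {t. g (x + t *\<^sub>R y) (x + t *\<^sub>R y) = 0}"
  proof
    fix t assume t: "t \<in> {t. B x x + (B x y + B y x) * t + B y y * t\<^sup>2 \<noteq> 0}"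
    have line: "x + t *\<^sub>R y \<in> S"
      using S(1) x y by (simp add: subspace_add subspace_mul)
    have "B (x + t *\<^sub>R y) (x + t *\<^sub>R y) = B x x + (B x y + B y x) * t + B y y * t\<^sup>2"
      using B by (simp add: bilinear_ladd bilinear_radd bilinear_lmul bilinear_rmul
          algebra_simps power2_eq_square)
    then show "t \<in> {t. g (x + t *\<^sub>R y) (x + t *\<^sub>R y) = 0}"
      using t nonnull[OF line] by force
  qed
  then show ?thesis
    using quadratic_eq_0_cofinite(1) finite_null_on_line[OF _ y(2)] True finite_subset by blast
qed

lemma symmetric_bilinear_eq_0_if_diag:
  assumes B: "bilinear B" and sym: "\<And>x y. B x y = B y x" and S: "subspace S"
    and diag: "\<And>x. x \<in> S \<Longrightarrow> B x x = (0::real)"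
    and "x \<in> S" "y \<in> S"
  shows "B x y = 0"
proof -
  have "B (x + y) (x + y) = B x x + 2 * B x y + B y y"
    using B sym[of y x] by (simp add: bilinear_ladd bilinear_radd)
  then show ?thesis
    using diag assms(5,6) S by (simp add: subspace_add)
qed

end

locale two_step_metric_lie_algebra = nondegenerate_form g
  for g :: "'a::euclidean_space \<Rightarrow> 'a \<Rightarrow> real" +
  fixes br :: "'a \<Rightarrow> 'a \<Rightarrow> 'a"
  assumes lie_algebra: "lie_algebra br"
    and two_step: "two_step_nilpotent br"
    and nondeg_center: "nondeg_on g (center br)"
begin

abbreviation Z where "Z \<equiv> center br"
abbreviation V where "V \<equiv> vpart g br"
abbreviation J where "J \<equiv> jmap g br"

lemma bilinear_br: "bilinear br"
  using lie_algebra by (simp add: lie_algebra_def)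

lemmas br_simps = bilinear_ladd[OF bilinear_br] bilinear_radd[OF bilinear_br]
  bilinear_lmul[OF bilinear_br] bilinear_rmul[OF bilinear_br]
  bilinear_lneg[OF bilinear_br] bilinear_rneg[OF bilinear_br]
  bilinear_lzero[OF bilinear_br] bilinear_rzero[OF bilinear_br]

lemma br_antisym: "br x y = - br y x"
  using lie_algebra unfolding lie_algebra_def by blast

lemma br_self: "br x x = 0"
proof -
  have "br x x + br x x = 0"
    using br_antisym[of x x] by (metis add.right_inverse)
  then show ?thesis
    by (simp flip: scaleR_2)
qed

lemma br_in_center: "br x y \<in> Z"
  using two_step by (simp add: two_step_nilpotent_def center_def)

lemma br_center_left: "c \<in> Z \<Longrightarrow> br c y = 0"
  by (simp add: center_def)

lemma br_center_right: "c \<in> Z \<Longrightarrow> br y c = 0"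
  using br_antisym[of y c] by (simp add: center_def)

lemma subspace_center: "subspace Z"
  unfolding subspace_def center_def by (auto simp: br_simps)

lemma vpart_eq_perp: "V = perp Z"
  by (simp add: vpart_def perp_def)

lemma subspace_vpart: "subspace V"
  by (simp add: vpart_eq_perp subspace_perp)

lemma nondeg_on_vpart: "nondeg_on g V"
  by (simp add: vpart_eq_perp nondeg_on_perp subspace_center nondeg_center)

lemma g_vpart_br: "x \<in> V \<Longrightarrow> g (br a b) x = 0"
  using br_in_center[of a b] symmetric[of "br a b" x] by (simp add: vpart_def)

lemma
  shows jmap_in_vpart: "J z x \<in> V" and g_jmap: "g (J z x) w = g (br x w) z"
proof -
  have "linear (\<lambda>w. g (br x w) z)"
    by (rule linearI) (simp_all add: br_simps g_simps)
  then obtain u where u: "\<And>w. g u w = g (br x w) z"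
    using linear_functional_representable by blast
  have uV: "u \<in> V"
    using u br_center_right by (simp add: vpart_def g_simps)
  have "J z x = u"
    unfolding jmap_def
  proof (rule the_equality)
    show "u \<in> V \<and> (\<forall>y\<in>V. g y u = g (br x y) z)"
      using uV u symmetric by metis
  next
    fix w assume w: "w \<in> V \<and> (\<forall>y\<in>V. g y w = g (br x y) z)"
    have "w - u \<in> V"
      using w uV subspace_vpart by (simp add: subspace_diff)
    moreover have "\<forall>y\<in>V. g (w - u) y = 0"
      using w u symmetric by (simp add: g_simps)
    ultimately have "w - u = 0"
      using nondeg_on_vpart unfolding nondeg_on_def by blast
    then show "w = u" by simp
  qed
  then show "J z x \<in> V" "g (J z x) w = g (br x w) z"
    using uV u by simp_all
qed

lemma jmap_eqI: "(\<And>w. g v w = g (br x w) z) \<Longrightarrow> J z x = v"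
  by (rule eq_if_g_eq) (simp add: g_jmap)

lemma bilinear_jmap: "bilinear J"
  unfolding bilinear_def
proof (intro allI conjI)
  show "linear (J z)" for z
    by (rule linearI) (rule jmap_eqI; simp add: g_jmap br_simps g_simps)+
  show "linear (\<lambda>z. J z x)" for x
    by (rule linearI) (rule jmap_eqI; simp add: g_jmap g_simps)+
qed

lemmas jmap_simps = bilinear_ladd[OF bilinear_jmap] bilinear_radd[OF bilinear_jmap]
  bilinear_lmul[OF bilinear_jmap] bilinear_rmul[OF bilinear_jmap]

lemma jmap_skew: "g (J z x) y = - g x (J z y)"
  using br_antisym[of x y] symmetric[of x "J z y"] by (simp add: g_jmap g_simps)

lemma nabla_eqI:
  assumes "\<And>W. 2 * g u W = g (br X Y) W - g (br Y W) X + g (br W X) Y"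
  shows "nabla g br X Y = u"
  unfolding nabla_def
proof (rule the_equality)
  fix u' assume "\<forall>W. 2 * g u' W = g (br X Y) W - g (br Y W) X + g (br W X) Y"
  then have "2 * g u' W = 2 * g u W" for W
    using assms by simp
  then show "u' = u"
    by (intro eq_if_g_eq) simp
qed (use assms in blast)

lemma curv_semi_central:
  assumes z: "z \<in> Z" and x: "x \<in> V"
  shows "g (curv g br z x x) z = g (J z x) (J z x) / 4"
proof -
  let ?K = "(-1/2) *\<^sub>R J z x"
  have "nabla g br x x = 0"
    by (rule nabla_eqI) (simp add: g_simps br_self g_vpart_br[OF x])
  moreover have "nabla g br z 0 = 0" "nabla g br 0 x = 0"
    by (rule nabla_eqI; simp add: g_simps br_simps)+
  moreover have "nabla g br z x = ?K"
    by (rule nabla_eqI) (simp add: g_simps g_jmap br_center_left[OF z] br_center_right[OF z])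
  moreover have "nabla g br x ?K = (1/2) *\<^sub>R br x ?K"
    by (rule nabla_eqI) (simp add: g_simps g_vpart_br[OF x] g_vpart_br[OF jmap_in_vpart])
  ultimately have "curv g br z x x = (1/4) *\<^sub>R br x (J z x)"
    by (simp add: curv_def br_center_left[OF z] br_simps)
  then show ?thesis
    by (simp add: g_simps g_jmap[of z x "J z x", symmetric])
qed

lemma
  assumes "z \<in> Z" and "x \<in> V"
  shows sec_curv_semi_central: "sec_curv g br z x = g (J z x) (J z x) / (4 * (g z z * g x x))"
    and nondeg_plane_semi_central: "nondeg_plane g z x \<longleftrightarrow> g z z * g x x \<noteq> 0"
  using assms symmetric[of z x]
  by (simp_all add: sec_curv_def nondeg_plane_def curv_semi_central vpart_def)

lemma bilinear_jmap_form_vpart: "bilinear (\<lambda>x y. g (J z x) (J z y) - g z z * g x y)"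
  unfolding bilinear_def by (auto intro!: linearI simp: jmap_simps g_simps algebra_simps)

lemma bilinear_jmap_form_center: "bilinear (\<lambda>z w. g (J z x) (J w x) - g z w * g x x)"
  unfolding bilinear_def by (auto intro!: linearI simp: jmap_simps g_simps algebra_simps)

lemma jmap_norm_if_nonnull:
  assumes nonnull: "\<And>z x. z \<in> Z \<Longrightarrow> x \<in> V \<Longrightarrow> g z z * g x x \<noteq> 0
      \<Longrightarrow> g (J z x) (J z x) = g z z * g x x"
    and z: "z \<in> Z" and x: "x \<in> V"
  shows "g (J z x) (J z x) = g z z * g x x"
proof -
  have nonnull_center: "g (J w y) (J w y) = g w w * g y y" if "w \<in> Z" "g w w \<noteq> 0" "y \<in> V" for w y
    using bilinear_diag_eq_0_if_nonnull[OF bilinear_jmap_form_vpart subspace_vpart nondeg_on_vpart,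
        of w y] nonnull that by simp
  show ?thesis
    using bilinear_diag_eq_0_if_nonnull[OF bilinear_jmap_form_center subspace_center nondeg_center,
        of x z] nonnull_center x z by simp
qed

lemma pseudo_H_type_iff_jmap_norm:
  "pseudo_H_type g br \<longleftrightarrow> (\<forall>z\<in>Z. \<forall>x\<in>V. g (J z x) (J z x) = g z z * g x x)"
proof
  assume H: "pseudo_H_type g br"
  show "\<forall>z\<in>Z. \<forall>x\<in>V. g (J z x) (J z x) = g z z * g x x"
  proof (intro ballI)
    fix z x assume "z \<in> Z" "x \<in> V"
    then have "J z (J z x) = - g z z *\<^sub>R x"
      using H by (simp add: pseudo_H_type_def)
    then show "g (J z x) (J z x) = g z z * g x x"
      using jmap_skew[of z x "J z x"] by (simp add: g_simps)
  qed
next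
  assume norm: "\<forall>z\<in>Z. \<forall>x\<in>V. g (J z x) (J z x) = g z z * g x x"
  show "pseudo_H_type g br"
    unfolding pseudo_H_type_def
  proof (intro ballI)
    fix z x assume z: "z \<in> Z" and x: "x \<in> V"
    let ?d = "J z (J z x) + g z z *\<^sub>R x"
    have "?d \<in> V"
      using x jmap_in_vpart subspace_vpart by (simp add: subspace_add subspace_mul)
    moreover have "g ?d y = 0" if y: "y \<in> V" for y
    proof -
      have "g (J z x) (J z y) = g z z * g x y"
        using symmetric_bilinear_eq_0_if_diag[OF bilinear_jmap_form_vpart _ subspace_vpart _ x y]
          norm z symmetric by simp
      then show ?thesis
        using jmap_skew[of z "J z x" y] by (simp add: g_simps)
    qed
    ultimately have "?d = 0"
      using nondeg_on_vpart unfolding nondeg_on_def by blast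
    then show "J z (J z x) = - g z z *\<^sub>R x"
      by (simp add: eq_neg_iff_add_eq_0)
  qed
qed

lemma sec_curv_quarter_iff:
  "(\<forall>z\<in>Z. \<forall>x\<in>V. nondeg_plane g z x \<longrightarrow> sec_curv g br z x = 1/4) \<longleftrightarrow>
    (\<forall>z\<in>Z. \<forall>x\<in>V. g z z * g x x \<noteq> 0 \<longrightarrow> g (J z x) (J z x) = g z z * g x x)"
  by (auto simp: sec_curv_semi_central nondeg_plane_semi_central field_simps)

end

theorem corollary4p9:
  fixes br :: "'a::euclidean_space \<Rightarrow> 'a \<Rightarrow> 'a" and g :: "'a \<Rightarrow> 'a \<Rightarrow> real"
  assumes "lie_algebra br" and "two_step_nilpotent br"
    and "pseudo_metric g"
    and "nondeg_on g (center br)"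
  shows "pseudo_H_type g br \<longleftrightarrow>
    (\<forall>z\<in>center br. \<forall>x\<in>vpart g br. nondeg_plane g z x \<longrightarrow> sec_curv g br z x = 1/4)"
proof -
  interpret two_step_metric_lie_algebra g br
    using assms by unfold_locales
  show ?thesis
    unfolding pseudo_H_type_iff_jmap_norm sec_curv_quarter_iff
    using jmap_norm_if_nonnull by blast
qed

end
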